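(* Let $A$ be a linear Nakayama algebra with simple modules $S_0,\dots,S_{n-1}$, Kupisch series $[c_0,\dots,c_{n-1}]$ and Jacobson radical $J$, and let $d_j=\dim_K D(Ae_j)$. Let $0\le i\le n-1$ and $1\le k\le c_i$. Then the indecomposable module $e_iA/e_iJ^k$ has injective dimension at most one if and only if either $k=d_{i+k-1}$, or ($k<d_{i+k-1}$ and $d_{i+k-1}-k=d_{i-1}$) (with the convention $d_{-1}:=0$). Moreover, $k=d_{i+k-1}$ holds if and only if $e_iA/e_iJ^k$ is injective.
   Context: $K$ is a field; a linear Nakayama algebra with $n$ simple modules is a connected algebra $A=KQ/I$ with $Q$ the quiver $0\to1\to\cdots\to n-1$ and $I$ admissible; modules are finite-dimensional right modules. $e_i$ are the primitive idempotents and $S_i$ the simple modules; $e_iA$ is uniserial with composition factors $S_i,S_{i+1},\dots,S_{i+c_i-1}$ from top to socle, where $c_i=\dim_K e_iA$ ([$c_0,\dots,c_{n-1}$] is the Kupisch series). $D=\operatorname{Hom}_K(-,K)$, and $D(Ae_j)$ is the indecomposable injective module with socle $S_j$ (the injective envelope of $S_j$). *)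

theory Defs
  imports "Jordan_Normal_Form.Matrix"
begin

(* Finite-dimensional right modules over the linear Nakayama algebra A = KQ/I,
   Q = 0 -> 1 -> ... -> n-1, are encoded as quiver representations:
   a representation is a pair (dims, arr) where dims j = dim_K (M e_j) and
   arr j :: dims (Suc j) x dims j matrix is the action of the arrow j -> j+1.
   Vertices j >= n carry the zero space. *)

type_synonym 'k rep = "(nat \<Rightarrow> nat) \<times> (nat \<Rightarrow> 'k mat)"

definition rdim :: "'k rep \<Rightarrow> nat \<Rightarrow> nat" where
  "rdim V = fst V"

definition rarr :: "'k rep \<Rightarrow> nat \<Rightarrow> 'k mat" where
  "rarr V = snd V"

fun rpath :: "'k::semiring_1 rep \<Rightarrow> nat \<Rightarrow> nat \<Rightarrow> 'k mat" where
  "rpath V i 0 = 1\<^sub>m (rdim V i)"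
| "rpath V i (Suc l) = rarr V (i + l) * rpath V i l"

definition linear_kupisch :: "nat \<Rightarrow> (nat \<Rightarrow> nat) \<Rightarrow> bool" where
  "linear_kupisch n c \<longleftrightarrow> n \<ge> 1 \<and> c (n - 1) = 1 \<and>
     (\<forall>i. Suc i < n \<longrightarrow> c i \<ge> 2 \<and> c (Suc i) + 1 \<ge> c i) \<and>
     (\<forall>i<n. c i \<ge> 1 \<and> i + c i \<le> n)"

(* V is a (finite-dimensional) module over the algebra with Kupisch series c:
   the path of length c_i starting at i acts as zero (this generates I). *)
definition is_rep :: "nat \<Rightarrow> (nat \<Rightarrow> nat) \<Rightarrow> 'k::field rep \<Rightarrow> bool" where
  "is_rep n c V \<longleftrightarrow> (\<forall>j\<ge>n. rdim V j = 0) \<and>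
     (\<forall>j. rarr V j \<in> carrier_mat (rdim V (Suc j)) (rdim V j)) \<and>
     (\<forall>i<n. rpath V i (c i) = 0\<^sub>m (rdim V (i + c i)) (rdim V i))"

definition is_hom :: "'k::field rep \<Rightarrow> 'k rep \<Rightarrow> (nat \<Rightarrow> 'k mat) \<Rightarrow> bool" where
  "is_hom V W f \<longleftrightarrow> (\<forall>j. f j \<in> carrier_mat (rdim W j) (rdim V j) \<and>
      f (Suc j) * rarr V j = rarr W j * f j)"

definition is_mono :: "'k::field rep \<Rightarrow> 'k rep \<Rightarrow> (nat \<Rightarrow> 'k mat) \<Rightarrow> bool" where
  "is_mono V W f \<longleftrightarrow> (\<forall>j. \<forall>v\<in>carrier_vec (rdim V j).
      f j *\<^sub>v v = 0\<^sub>v (rdim W j) \<longrightarrow> v = 0\<^sub>v (rdim V j))"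

definition is_epi :: "'k::field rep \<Rightarrow> 'k rep \<Rightarrow> (nat \<Rightarrow> 'k mat) \<Rightarrow> bool" where
  "is_epi V W f \<longleftrightarrow> (\<forall>j. \<forall>w\<in>carrier_vec (rdim W j).
      \<exists>v\<in>carrier_vec (rdim V j). f j *\<^sub>v v = w)"

definition is_exact_at :: "'k::field rep \<Rightarrow> 'k rep \<Rightarrow> 'k rep \<Rightarrow>
    (nat \<Rightarrow> 'k mat) \<Rightarrow> (nat \<Rightarrow> 'k mat) \<Rightarrow> bool" where
  "is_exact_at U V W f g \<longleftrightarrow> (\<forall>j. \<forall>v\<in>carrier_vec (rdim V j).
      g j *\<^sub>v v = 0\<^sub>v (rdim W j) \<longleftrightarrow> (\<exists>u\<in>carrier_vec (rdim U j). f j *\<^sub>v u = v))"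

definition is_injective :: "nat \<Rightarrow> (nat \<Rightarrow> nat) \<Rightarrow> 'k::field rep \<Rightarrow> bool" where
  "is_injective n c I \<longleftrightarrow> is_rep n c I \<and>
     (\<forall>X Y u g. is_rep n c X \<longrightarrow> is_rep n c Y \<longrightarrow> is_hom X Y u \<longrightarrow> is_mono X Y u \<longrightarrow>
        is_hom X I g \<longrightarrow> (\<exists>h. is_hom Y I h \<and> (\<forall>j. h j * u j = g j)))"

definition injdim_le_one :: "nat \<Rightarrow> (nat \<Rightarrow> nat) \<Rightarrow> 'k::field rep \<Rightarrow> bool" where
  "injdim_le_one n c M \<longleftrightarrow> (\<exists>I0 I1 f g.
      is_injective n c I0 \<and> is_injective n c I1 \<and>
      is_hom M I0 f \<and> is_hom I0 I1 g \<and>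
      is_mono M I0 f \<and> is_exact_at M I0 I1 f g \<and> is_epi I0 I1 g)"

(* the module e_i A / e_i J^k : uniserial with composition factors
   S_i, ..., S_{i+k-1}, i.e. K at vertices i..i+k-1 joined by identities *)
definition uniserial_mod :: "nat \<Rightarrow> nat \<Rightarrow> 'k::field rep" where
  "uniserial_mod i k =
     (let d = (\<lambda>j. if i \<le> j \<and> j < i + k then 1 else 0)
      in (d, (\<lambda>j. if i \<le> j \<and> Suc j < i + k then 1\<^sub>m 1 else 0\<^sub>m (d (Suc j)) (d j))))"

(* d_j = dim_K D(A e_j) = dim_K A e_j = sum_m dim_K e_m A e_j,
   and e_m A e_j is K (nonzero path m -> j) iff m <= j < m + c_m, else 0 *)
definition dinj :: "(nat \<Rightarrow> nat) \<Rightarrow> nat \<Rightarrow> nat" where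
  "dinj c j = card {m. m \<le> j \<and> j < m + c m}"

definition dinj_pred :: "(nat \<Rightarrow> nat) \<Rightarrow> nat \<Rightarrow> nat" where
  "dinj_pred c i = (if i = 0 then 0 else dinj c (i - 1))"

end

theory Submission
  imports Defs "Jordan_Normal_Form.Matrix_Kernel"
begin

(* M = e_i A / e_i J^k is uniserial with top S_i and socle S_j, j = i + k - 1. Its injective
   envelope is the uniserial module E = D(A e_j) of length d_j with top S_a, a = j + 1 - d_j:
   a homomorphism into a uniserial module is determined by its component at the socle, and a
   functional on the socle vertex extends as long as it kills the paths from a - 1, which
   vanish in every module by the choice of a. Hence M is injective iff M = E, i.e. k = d_j.
   Otherwise N = E/M is uniserial with top S_a and socle S_(i-1), and 0 -> M -> E -> N -> 0
   shows injdim M <= 1 once N is injective, i.e. once its length d_j - k equals d_(i-1).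
   Conversely, given an injective coresolution 0 -> M -> I0 -> I1 -> 0, the envelope E splits
   off I0 compatibly with M, and then N splits off I1, so N is injective. *)

section \<open>Matrices\<close>

lemma row_echelon_all_pivots_left_inverse:
  fixes C :: "'k::field mat"
  assumes C: "C \<in> carrier_mat nr nc" and ref: "row_echelon_form C"
    and all_pivots: "snd ` set (pivot_positions C) = {0 ..< nc}"
  obtains S where "S \<in> carrier_mat nc nr" "S * C = 1\<^sub>m nc"
proof -
  from ref C obtain f where pf: "pivot_fun C f nc" unfolding row_echelon_form_def by auto
  have "dim_row C = nr" using C by auto
  note pv = pivot_funD[OF this pf]
  have pivot_row: "\<exists>i<nr. f i = j" if "j < nc" for j
  proof -
    from that all_pivots have "j \<in> snd ` set (pivot_positions C)" by auto
    thus ?thesis unfolding pivot_positions(1)[OF C pf] by auto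
  qed
  have pivot_inj: "i1 = i2" if "i1 < nr" "i2 < nr" "f i1 = f i2" "f i1 < nc" for i1 i2
  proof (rule ccontr)
    assume "i1 \<noteq> i2"
    from pv(5)[OF that(1) that(4) that(2)] this pv(4)[OF that(2)] that show False by auto
  qed
  \<comment> \<open>Selecting the pivot rows inverts \<open>C\<close> from the left.\<close>
  define S where "S = mat nc nr (\<lambda>(j, i). if f i = j then (1::'k) else 0)"
  have S: "S \<in> carrier_mat nc nr" unfolding S_def by auto
  have "S * C = 1\<^sub>m nc"
  proof (rule eq_matI)
    fix j j' assume "j < dim_row (1\<^sub>m nc)" and "j' < dim_col (1\<^sub>m nc)"
    hence j: "j < nc" and j': "j' < nc" by auto
    from pivot_row[OF j] obtain i0 where i0: "i0 < nr" "f i0 = j" by auto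
    have "(S * C) $$ (j, j') = (\<Sum>i<nr. S $$ (j, i) * C $$ (i, j'))"
      using S C j j' by (auto simp: scalar_prod_def atLeast0LessThan)
    also have "\<dots> = (\<Sum>i<nr. if i = i0 then C $$ (i0, j') else 0)"
      using pivot_inj i0 j by (intro sum.cong) (auto simp: S_def)
    also have "\<dots> = C $$ (i0, j')" using i0 by simp
    also have "\<dots> = 1\<^sub>m nc $$ (j, j')"
    proof (cases "j' = j")
      case False
      from pivot_row[OF j'] obtain i1 where i1: "i1 < nr" "f i1 = j'" by auto
      with False i0 have "i1 \<noteq> i0" by auto
      from pv(5)[OF i1(1) _ i0(1) this[symmetric]] i1 j' False j show ?thesis by auto
    qed (use pv(4)[OF i0(1)] i0 j in auto)
    finally show "(S * C) $$ (j, j') = 1\<^sub>m nc $$ (j, j')" .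
  qed (use S C in auto)
  with S show thesis by (rule that)
qed

lemma mat_left_inverse_exists:
  fixes A :: "'k::field mat"
  assumes A: "A \<in> carrier_mat nr nc"
    and inj: "\<And>v. v \<in> carrier_vec nc \<Longrightarrow> A *\<^sub>v v = 0\<^sub>v nr \<Longrightarrow> v = 0\<^sub>v nc"
  obtains L where "L \<in> carrier_mat nc nr" "L * A = 1\<^sub>m nc"
proof -
  obtain C where gj: "gauss_jordan_single A = C" by auto
  note g = gauss_jordan_single[OF A gj]
  obtain P where CPA: "C = P * A" and P: "P \<in> carrier_mat nr nr" using g(4) by auto
  have C: "C \<in> carrier_mat nr nc" and ref: "row_echelon_form C" by (rule g(2), rule g(3))
  \<comment> \<open>A free column of the echelon form would yield a nonzero vector in the kernel of \<open>A\<close>.\<close>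
  have "snd ` set (pivot_positions C) = {0 ..< nc}"
    using find_base_vector[OF ref C] g(1) inj by blast
  then obtain S where S: "S \<in> carrier_mat nc nr" and SC: "S * C = 1\<^sub>m nc"
    using row_echelon_all_pivots_left_inverse[OF C ref] by blast
  have "(S * P) * A = 1\<^sub>m nc" using SC CPA S P A by (simp add: assoc_mult_mat[of S nc nr P nr A nc])
  with S P show thesis by (intro that[of "S * P"]) auto
qed

lemma mat_eq_by_mult_vec:
  fixes A B :: "'k::field mat"
  assumes A: "A \<in> carrier_mat nr nc" and B: "B \<in> carrier_mat nr nc"
    and eq: "\<And>v. v \<in> carrier_vec nc \<Longrightarrow> A *\<^sub>v v = B *\<^sub>v v"
  shows "A = B"
proof (rule eq_matI)
  fix i j assume i: "i < dim_row B" and j: "j < dim_col B"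
  have "(A *\<^sub>v unit_vec nc j) $ i = (B *\<^sub>v unit_vec nc j) $ i" using eq[of "unit_vec nc j"] by simp
  thus "A $$ (i, j) = B $$ (i, j)" using A B i j by simp
qed (use A B in auto)

lemma mat_mult_right_cancel_surj:
  fixes A B G :: "'k::field mat"
  assumes A: "A \<in> carrier_mat nr r" and B: "B \<in> carrier_mat nr r" and G: "G \<in> carrier_mat r nc"
    and surj: "\<And>w. w \<in> carrier_vec r \<Longrightarrow> \<exists>v\<in>carrier_vec nc. G *\<^sub>v v = w"
    and eq: "A * G = B * G"
  shows "A = B"
proof (rule mat_eq_by_mult_vec[OF A B])
  fix w :: "'k vec" assume "w \<in> carrier_vec r"
  then obtain v where v: "v \<in> carrier_vec nc" "G *\<^sub>v v = w" using surj by blast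
  have "A *\<^sub>v w = (A * G) *\<^sub>v v" using A G v by auto
  also have "\<dots> = (B * G) *\<^sub>v v" by (simp add: eq)
  also have "\<dots> = B *\<^sub>v w" using B G v by auto
  finally show "A *\<^sub>v w = B *\<^sub>v w" .
qed

lemma carrier_mat_0_rows_eq: "A \<in> carrier_mat 0 nc \<Longrightarrow> B \<in> carrier_mat 0 nc \<Longrightarrow> A = B"
  by (rule eq_matI) auto

lemma carrier_mat_0_cols_eq: "A \<in> carrier_mat nr 0 \<Longrightarrow> B \<in> carrier_mat nr 0 \<Longrightarrow> A = B"
  by (rule eq_matI) auto

lemma carrier_vec_0_eq: "v \<in> carrier_vec 0 \<Longrightarrow> v = 0\<^sub>v 0"
  by (rule eq_vecI) auto

lemma mult_mat_through_0:
  "A \<in> carrier_mat nr 0 \<Longrightarrow> B \<in> carrier_mat 0 nc \<Longrightarrow> A * B = (0\<^sub>m nr nc :: 'k::field mat)"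
  by (rule eq_matI) (auto simp: scalar_prod_def)

lemma mult_mat_vec_0_rows: "A \<in> carrier_mat 0 nc \<Longrightarrow> A *\<^sub>v v = (0\<^sub>v 0 :: 'k::field vec)"
  by (rule eq_vecI) auto

lemma mult_mat_vec_0_cols:
  "A \<in> carrier_mat nr 0 \<Longrightarrow> v \<in> carrier_vec 0 \<Longrightarrow> A *\<^sub>v v = (0\<^sub>v nr :: 'k::field vec)"
  by (rule eq_vecI) (auto simp: scalar_prod_def)

section \<open>Representations of the linear quiver\<close>

definition wf_arrows :: "'k::field rep \<Rightarrow> bool" where
  "wf_arrows V \<longleftrightarrow> (\<forall>j. rarr V j \<in> carrier_mat (rdim V (Suc j)) (rdim V j))"

lemma wf_arrowsD: "wf_arrows V \<Longrightarrow> rarr V j \<in> carrier_mat (rdim V (Suc j)) (rdim V j)"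
  unfolding wf_arrows_def by blast

lemma is_rep_wf_arrows: "is_rep n c V \<Longrightarrow> wf_arrows V"
  unfolding is_rep_def wf_arrows_def by blast

lemma is_homD:
  assumes "is_hom V W f"
  shows "f m \<in> carrier_mat (rdim W m) (rdim V m)" and "f (Suc m) * rarr V m = rarr W m * f m"
  using assms unfolding is_hom_def by blast+

lemma rpath_carrier: "wf_arrows V \<Longrightarrow> rpath V m p \<in> carrier_mat (rdim V (m + p)) (rdim V m)"
proof (induction p)
  case (Suc p)
  from mult_carrier_mat[OF wf_arrowsD[OF Suc.prems] Suc.IH[OF Suc.prems]] show ?case by simp
qed simp

lemma rpath_add:
  assumes V: "wf_arrows V"
  shows "rpath V m (p + q) = rpath V (m + p) q * rpath V m p"
proof (induction q)
  case 0 thus ?case using rpath_carrier[OF V, of m p] by simp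
next
  case (Suc q)
  have "rpath V m (p + Suc q) = rarr V (m + p + q) * (rpath V (m + p) q * rpath V m p)"
    using Suc by (simp add: add.assoc)
  also have "\<dots> = (rarr V (m + p + q) * rpath V (m + p) q) * rpath V m p"
    using wf_arrowsD[OF V] rpath_carrier[OF V] by (metis assoc_mult_mat)
  finally show ?case by simp
qed

lemma rpath_Suc_left:
  assumes V: "wf_arrows V"
  shows "rpath V m (Suc p) = rpath V (Suc m) p * rarr V m"
  using rpath_add[OF V, of m 1 p] wf_arrowsD[OF V, of m] by simp

lemma hom_rpath:
  assumes V: "wf_arrows V" and W: "wf_arrows W" and f: "is_hom V W f"
  shows "f (m + p) * rpath V m p = rpath W m p * f m"
proof (induction p)
  case 0 thus ?case using is_homD(1)[OF f, of m] by simp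
next
  case (Suc p)
  note fc = is_homD(1)[OF f] and fa = is_homD(2)[OF f]
  note aV = wf_arrowsD[OF V] and aW = wf_arrowsD[OF W]
  note pV = rpath_carrier[OF V] and pW = rpath_carrier[OF W]
  have "f (m + Suc p) * rpath V m (Suc p) = (f (Suc (m + p)) * rarr V (m + p)) * rpath V m p"
    using fc aV pV by (simp add: assoc_mult_mat[symmetric, of _ "rdim W (Suc (m+p))" "rdim V (Suc (m+p))" _ "rdim V (m+p)" _ "rdim V m"])
  also have "\<dots> = rarr W (m + p) * (f (m + p) * rpath V m p)"
    using fc aW pV by (simp add: fa assoc_mult_mat[of _ "rdim W (Suc (m+p))" "rdim W (m+p)" _ "rdim V (m+p)" _ "rdim V m"])
  also have "\<dots> = (rarr W (m + p) * rpath W m p) * f m"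
    using fc aW pW by (simp add: Suc assoc_mult_mat[symmetric, of _ "rdim W (Suc (m+p))" "rdim W (m+p)" _ "rdim W m" _ "rdim V m"])
  finally show ?case by simp
qed

lemma is_rep_rpath_zero:
  assumes V: "is_rep n c V" and m: "m < n" and p: "c m \<le> p"
  shows "rpath V m p = 0\<^sub>m (rdim V (m + p)) (rdim V m)"
proof -
  have wf: "wf_arrows V" by (rule is_rep_wf_arrows[OF V])
  have z: "rpath V m (c m) = 0\<^sub>m (rdim V (m + c m)) (rdim V m)" using V m unfolding is_rep_def by auto
  have "rpath V m (c m + (p - c m)) = rpath V (m + c m) (p - c m) * rpath V m (c m)"
    by (rule rpath_add[OF wf])
  also have "\<dots> = 0\<^sub>m (rdim V (m + c m + (p - c m))) (rdim V m)"
    unfolding z using rpath_carrier[OF wf, of "m + c m" "p - c m"] by simp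
  finally show ?thesis using p by simp
qed

lemma is_hom_comp:
  assumes f: "is_hom U V f" and g: "is_hom V W g"
    and U: "wf_arrows U" and V: "wf_arrows V" and W: "wf_arrows W"
  shows "is_hom U W (\<lambda>m. g m * f m)"
  unfolding is_hom_def
proof (intro allI conjI)
  fix j
  note fc = is_homD(1)[OF f] and gc = is_homD(1)[OF g]
  show "g j * f j \<in> carrier_mat (rdim W j) (rdim U j)" by (rule mult_carrier_mat[OF gc fc])
  have "g (Suc j) * f (Suc j) * rarr U j = g (Suc j) * (f (Suc j) * rarr U j)"
    by (rule assoc_mult_mat[OF gc fc wf_arrowsD[OF U]])
  also have "\<dots> = (g (Suc j) * rarr V j) * f j"
    unfolding is_homD(2)[OF f] by (rule assoc_mult_mat[symmetric, OF gc wf_arrowsD[OF V] fc])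
  also have "\<dots> = rarr W j * (g j * f j)"
    unfolding is_homD(2)[OF g] by (rule assoc_mult_mat[OF wf_arrowsD[OF W] gc fc])
  finally show "g (Suc j) * f (Suc j) * rarr U j = rarr W j * (g j * f j)" .
qed

lemma is_hom_id:
  assumes "wf_arrows V"
  shows "is_hom V V (\<lambda>m. 1\<^sub>m (rdim V m))"
  unfolding is_hom_def
proof (intro allI conjI)
  fix j
  from wf_arrowsD[OF assms, of j]
  show "1\<^sub>m (rdim V (Suc j)) * rarr V j = rarr V j * 1\<^sub>m (rdim V j)" by simp
qed simp

lemma is_exact_at_comp_zero:
  assumes ex: "is_exact_at U V W f g" and f: "is_hom U V f" and g: "is_hom V W g"
  shows "g m * f m = 0\<^sub>m (rdim W m) (rdim U m)"
proof (rule mat_eq_by_mult_vec)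
  show "g m * f m \<in> carrier_mat (rdim W m) (rdim U m)"
    by (rule mult_carrier_mat[OF is_homD(1)[OF g] is_homD(1)[OF f]])
  fix v :: "'a vec" assume v: "v \<in> carrier_vec (rdim U m)"
  have "f m *\<^sub>v v \<in> carrier_vec (rdim V m)" using is_homD(1)[OF f, of m] v by simp
  with ex v have "g m *\<^sub>v (f m *\<^sub>v v) = 0\<^sub>v (rdim W m)"
    unfolding is_exact_at_def by blast
  thus "(g m * f m) *\<^sub>v v = 0\<^sub>m (rdim W m) (rdim U m) *\<^sub>v v"
    using is_homD(1)[OF f, of m] is_homD(1)[OF g, of m] v by (auto simp: scalar_prod_def)
qed simp

lemma is_exact_at_injective_where_zero:
  assumes ex: "is_exact_at U V W f g" and f: "is_hom U V f" and U0: "rdim U m = 0"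
    and v: "v \<in> carrier_vec (rdim V m)" and gv: "g m *\<^sub>v v = 0\<^sub>v (rdim W m)"
  shows "v = 0\<^sub>v (rdim V m)"
proof -
  from ex v gv obtain u where u: "u \<in> carrier_vec (rdim U m)" and "f m *\<^sub>v u = v"
    unfolding is_exact_at_def by blast
  with is_homD(1)[OF f] U0 show ?thesis by (metis mult_mat_vec_0_cols)
qed

definition zero_rep :: "'k::field rep" where
  "zero_rep = ((\<lambda>_. 0), (\<lambda>_. 0\<^sub>m 0 0))"

lemma zero_rep_simps [simp]: "rdim zero_rep m = 0" "rarr zero_rep m = 0\<^sub>m 0 0"
  unfolding zero_rep_def rdim_def rarr_def by auto

lemma is_hom_to_zero_rep: "wf_arrows V \<Longrightarrow> is_hom V zero_rep (\<lambda>m. 0\<^sub>m 0 (rdim V m))"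
  unfolding is_hom_def
proof (intro allI conjI)
  fix j assume "wf_arrows V"
  from wf_arrowsD[OF this, of j]
  show "0\<^sub>m 0 (rdim V (Suc j)) * rarr V j = rarr zero_rep j * 0\<^sub>m 0 (rdim V j)"
    by (intro carrier_mat_0_rows_eq[of _ "rdim V j"]) auto
qed simp

lemma zero_rep_injective: "is_injective n c (zero_rep :: 'k::field rep)"
  unfolding is_injective_def
proof (intro conjI allI impI)
  show "is_rep n c (zero_rep :: 'k rep)" unfolding is_rep_def
    using rpath_carrier[of "zero_rep :: 'k rep"]
    by (auto simp: wf_arrows_def intro!: carrier_mat_0_rows_eq[of _ 0])
  fix X Y :: "'k rep" and u g
  assume Y: "is_rep n c Y" and u: "is_hom X Y u" and g: "is_hom X zero_rep g"
  have "0\<^sub>m 0 (rdim Y j) * u j = g j" for j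
    using is_homD(1)[OF u, of j] is_homD(1)[OF g, of j]
    by (intro carrier_mat_0_rows_eq[of _ "rdim X j"]) auto
  with is_hom_to_zero_rep[OF is_rep_wf_arrows[OF Y]]
  show "\<exists>h. is_hom Y zero_rep h \<and> (\<forall>j. h j * u j = g j)" by blast
qed

lemma injective_retract:
  assumes N: "is_rep n c N" and I: "is_injective n c I"
    and al: "is_hom N I al" and be: "is_hom I N be" and be_al: "\<And>m. be m * al m = 1\<^sub>m (rdim N m)"
  shows "is_injective n c N"
  unfolding is_injective_def
proof (intro conjI allI impI N)
  fix X Y u g
  assume X: "is_rep n c X" and Y: "is_rep n c Y" and u: "is_hom X Y u" and "is_mono X Y u"
    and g: "is_hom X N g"
  have wfI: "wf_arrows I" using I is_rep_wf_arrows unfolding is_injective_def by blast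
  have wf: "wf_arrows X" "wf_arrows Y" "wf_arrows N" using X Y N by (auto intro: is_rep_wf_arrows)
  have "is_hom X I (\<lambda>m. al m * g m)" by (rule is_hom_comp[OF g al wf(1,3) wfI])
  with I X Y u \<open>is_mono X Y u\<close>
  obtain h where h: "is_hom Y I h" and hu: "\<And>m. h m * u m = al m * g m"
    unfolding is_injective_def by blast
  have "be m * h m * u m = g m" for m
  proof -
    note c = is_homD(1)[OF h, of m] is_homD(1)[OF u, of m] is_homD(1)[OF be, of m]
      is_homD(1)[OF al, of m] is_homD(1)[OF g, of m]
    have "be m * h m * u m = be m * (al m * g m)" using assoc_mult_mat[OF c(3,1,2)] hu by simp
    also have "\<dots> = (be m * al m) * g m" using assoc_mult_mat[OF c(3,4,5)] by simp
    finally show ?thesis using be_al c(5) by simp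
  qed
  with is_hom_comp[OF h be wf(2) wfI wf(3)]
  show "\<exists>h. is_hom Y N h \<and> (\<forall>j. h j * u j = g j)" by blast
qed

lemma injdim_le_one_if_injective:
  assumes M: "is_injective n c M"
  shows "injdim_le_one n c M"
proof -
  have wf: "wf_arrows M" using M is_rep_wf_arrows unfolding is_injective_def by blast
  let ?g = "\<lambda>m. 0\<^sub>m 0 (rdim M m)"
  have "is_exact_at M M zero_rep (\<lambda>m. 1\<^sub>m (rdim M m)) ?g"
    unfolding is_exact_at_def by (auto intro: carrier_vec_0_eq)
  moreover have "is_epi M zero_rep ?g"
    unfolding is_epi_def
  proof (intro allI ballI)
    fix m and w :: "'a vec" assume "w \<in> carrier_vec (rdim zero_rep m)"
    thus "\<exists>v\<in>carrier_vec (rdim M m). ?g m *\<^sub>v v = w"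
      by (intro bexI[of _ "0\<^sub>v (rdim M m)"]) (auto intro: carrier_vec_0_eq)
  qed
  ultimately show ?thesis unfolding injdim_le_one_def is_mono_def
    using M zero_rep_injective is_hom_id[OF wf] is_hom_to_zero_rep[OF wf] by fastforce
qed

section \<open>The Kupisch series\<close>

lemma kupisch_end_mono:
  assumes K: "linear_kupisch n c" and "b \<le> m" "m < n"
  shows "b + c b \<le> m + c m"
  using assms(2,3)
proof (induction m)
  case (Suc m)
  show ?case
  proof (cases "b = Suc m")
    case False
    with Suc have "b + c b \<le> m + c m" by simp
    moreover have "c m \<le> c (Suc m) + 1" using K Suc.prems unfolding linear_kupisch_def by auto
    ultimately show ?thesis by simp
  qed simp
qed simp

lemma dinj_interval:
  assumes K: "linear_kupisch n c" and j: "j < n"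
  shows "1 \<le> dinj c j" and "dinj c j \<le> j + 1"
    and "\<And>m. m \<le> j \<Longrightarrow> j < m + c m \<longleftrightarrow> j + 1 - dinj c j \<le> m"
proof -
  let ?S = "{m. m \<le> j \<and> j < m + c m}"
  have jS: "j \<in> ?S" using K j unfolding linear_kupisch_def by auto
  define a where "a = (LEAST m. m \<in> ?S)"
  have aS: "a \<in> ?S" unfolding a_def by (rule LeastI[of "\<lambda>m. m \<in> ?S", OF jS])
  have S: "?S = {a..j}"
  proof
    show "?S \<subseteq> {a..j}" using Least_le[of "\<lambda>m. m \<in> ?S"] unfolding a_def by auto
    show "{a..j} \<subseteq> ?S"
    proof
      fix m assume m: "m \<in> {a..j}"
      have "a + c a \<le> m + c m" using kupisch_end_mono[OF K, of a m] m j by auto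
      with aS m show "m \<in> ?S" by auto
    qed
  qed
  have d: "dinj c j = j + 1 - a" unfolding dinj_def S using aS by auto
  show "1 \<le> dinj c j" "dinj c j \<le> j + 1" using d aS by auto
  fix m assume m: "m \<le> j"
  have "j < m + c m \<longleftrightarrow> m \<in> ?S" using m by simp
  also have "\<dots> \<longleftrightarrow> a \<le> m" using m unfolding S by simp
  finally show "j < m + c m \<longleftrightarrow> j + 1 - dinj c j \<le> m" using d aS by auto
qed

lemma dinj_hull_bounds:
  assumes K: "linear_kupisch n c" and bl: "b + l \<le> n" and l: "1 \<le> l" and lc: "l \<le> c b"
  shows "l \<le> dinj c (b + l - 1)" and "dinj c (b + l - 1) \<le> b + l"
    and "dinj c (b + l - 1) \<le> c (b + l - dinj c (b + l - 1))"
proof -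
  let ?j = "b + l - 1"
  have j: "?j < n" using bl l by auto
  note dc = dinj_interval[OF K j]
  have "?j < b + c b" using lc l by auto
  hence "?j + 1 - dinj c ?j \<le> b" using dc(3)[of b] l by auto
  thus "l \<le> dinj c ?j" using l by auto
  show "dinj c ?j \<le> b + l" using dc(2) l by auto
  have "?j < (?j + 1 - dinj c ?j) + c (?j + 1 - dinj c ?j)" using dc(1) dc(3)[of "?j + 1 - dinj c ?j"] by auto
  thus "dinj c ?j \<le> c (b + l - dinj c ?j)" using l dc(2) by auto
qed

section \<open>Uniserial modules\<close>

definition ones :: "nat \<Rightarrow> nat \<Rightarrow> 'k::field mat" where
  "ones r c = mat r c (\<lambda>_. 1)"

lemma ones_carrier [simp]: "ones r c \<in> carrier_mat r c"
  unfolding ones_def by auto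

lemma ones_zero: "r = 0 \<or> c = 0 \<Longrightarrow> ones r c = (0\<^sub>m r c :: 'k::field mat)"
  by (rule eq_matI) (auto simp: ones_def)

lemma ones_one [simp]: "ones 1 1 = (1\<^sub>m 1 :: 'k::field mat)" "ones (Suc 0) (Suc 0) = (1\<^sub>m (Suc 0) :: 'k mat)"
  by (auto intro!: eq_matI simp: ones_def)

lemma ones_mult:
  assumes "s \<le> 1"
  shows "ones r s * ones s t = (if s = 0 then 0\<^sub>m r t else (ones r t :: 'k::field mat))"
  using assms by (intro eq_matI) (auto simp: ones_def scalar_prod_def le_Suc_eq)

lemma ones_mult_eq:
  assumes "q \<le> 1" "q' \<le> 1" "p = 0 \<or> r = 0 \<or> q = q'"
  shows "ones p q * ones q r = (ones p q' * ones q' r :: 'k::field mat)"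
  using assms by (auto simp: ones_mult intro: ones_zero[symmetric] ones_zero)

text \<open>The map \<open>uni_map b l a d\<close> is the identity wherever both modules are nonzero; it serves
  as the inclusion of a submodule and as the projection onto a quotient.\<close>

definition uni_dim :: "nat \<Rightarrow> nat \<Rightarrow> nat \<Rightarrow> nat" where
  "uni_dim b l m = (if b \<le> m \<and> m < b + l then 1 else 0)"

definition uni_map :: "nat \<Rightarrow> nat \<Rightarrow> nat \<Rightarrow> nat \<Rightarrow> nat \<Rightarrow> 'k::field mat" where
  "uni_map b l a d m = ones (uni_dim a d m) (uni_dim b l m)"

lemma uni_dim_le_1 [simp]: "uni_dim b l m \<le> 1"
  unfolding uni_dim_def by auto

lemma uni_map_carrier [simp]: "uni_map b l a d m \<in> carrier_mat (uni_dim a d m) (uni_dim b l m)"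
  unfolding uni_map_def by simp

lemma rdim_uniserial: "rdim (uniserial_mod b l :: 'k::field rep) = uni_dim b l"
  unfolding uniserial_mod_def rdim_def uni_dim_def Let_def by (auto simp: fun_eq_iff)

lemma rarr_uniserial:
  "rarr (uniserial_mod b l :: 'k::field rep) m = ones (uni_dim b l (Suc m)) (uni_dim b l m)"
proof (cases "b \<le> m \<and> Suc m < b + l")
  case True thus ?thesis unfolding uniserial_mod_def rarr_def uni_dim_def Let_def by simp
next
  case False
  hence "uni_dim b l (Suc m) = 0 \<or> uni_dim b l m = 0" unfolding uni_dim_def by auto
  with False show ?thesis unfolding uniserial_mod_def rarr_def Let_def
    by (subst ones_zero) (auto simp: uni_dim_def)
qed

lemma rpath_uniserial:
  "rpath (uniserial_mod b l :: 'k::field rep) m p = ones (uni_dim b l (m + p)) (uni_dim b l m)"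
proof (induction p)
  case 0 show ?case by (simp add: rdim_uniserial) (auto simp: uni_dim_def ones_def intro!: eq_matI)
next
  case (Suc p)
  have "rpath (uniserial_mod b l :: 'k rep) m (Suc p) =
     ones (uni_dim b l (Suc (m + p))) (uni_dim b l (m + p)) * ones (uni_dim b l (m + p)) (uni_dim b l m)"
    by (simp add: Suc rarr_uniserial)
  also have "\<dots> = ones (uni_dim b l (m + Suc p)) (uni_dim b l m)"
    by (subst ones_mult) (auto intro!: ones_zero[symmetric] simp: uni_dim_def)
  finally show ?case .
qed

lemma wf_arrows_uniserial: "wf_arrows (uniserial_mod b l :: 'k::field rep)"
  unfolding wf_arrows_def rarr_uniserial rdim_uniserial by simp

lemma uniserial_is_rep:
  assumes K: "linear_kupisch n c" and bl: "b + l \<le> n" and b: "b < n" and lc: "l \<le> c b"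
  shows "is_rep n c (uniserial_mod b l :: 'k::field rep)"
  unfolding is_rep_def rdim_uniserial rpath_uniserial
proof (intro conjI allI impI wf_arrowsD[OF wf_arrows_uniserial, unfolded rdim_uniserial])
  fix j assume "n \<le> j" thus "uni_dim b l j = 0" using bl by (simp add: uni_dim_def)
next
  fix m assume m: "m < n"
  have "uni_dim b l (m + c m) = 0 \<or> uni_dim b l m = 0"
    using kupisch_end_mono[OF K, of b m] m lc by (auto simp: uni_dim_def)
  thus "ones (uni_dim b l (m + c m)) (uni_dim b l m) = (0\<^sub>m (uni_dim b l (m + c m)) (uni_dim b l m) :: 'k mat)"
    by (rule ones_zero)
qed

lemma is_hom_uni_map_incl:
  assumes "a \<le> b" "b + l = a + d"
  shows "is_hom (uniserial_mod b l) (uniserial_mod a d) (uni_map b l a d :: nat \<Rightarrow> 'k::field mat)"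
  unfolding is_hom_def rdim_uniserial rarr_uniserial uni_map_def
  by (auto intro!: ones_mult_eq) (use assms in \<open>auto simp: uni_dim_def split: if_splits\<close>)

lemma is_mono_uni_map_incl:
  assumes "a \<le> b" "b + l = a + d"
  shows "is_mono (uniserial_mod b l) (uniserial_mod a d) (uni_map b l a d :: nat \<Rightarrow> 'k::field mat)"
  unfolding is_mono_def rdim_uniserial uni_map_def
proof (intro allI ballI impI)
  fix m and v :: "'k vec" assume v: "v \<in> carrier_vec (uni_dim b l m)"
    and z: "ones (uni_dim a d m) (uni_dim b l m) *\<^sub>v v = 0\<^sub>v (uni_dim a d m)"
  show "v = 0\<^sub>v (uni_dim b l m)"
  proof (cases "b \<le> m \<and> m < b + l")
    case True
    hence "uni_dim a d m = 1" "uni_dim b l m = 1" using assms unfolding uni_dim_def by auto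
    thus ?thesis using z v by simp
  qed (use v carrier_vec_0_eq in \<open>auto simp: uni_dim_def\<close>)
qed

lemma is_hom_uni_map_quot:
  assumes "l \<le> d"
  shows "is_hom (uniserial_mod a d) (uniserial_mod a l) (uni_map a d a l :: nat \<Rightarrow> 'k::field mat)"
  unfolding is_hom_def rdim_uniserial rarr_uniserial uni_map_def
  by (auto intro!: ones_mult_eq) (use assms in \<open>auto simp: uni_dim_def split: if_splits\<close>)

lemma uniserial_short_exact:
  assumes ab: "a \<le> b" and bl: "b + l = a + d"
  shows "is_exact_at (uniserial_mod b l) (uniserial_mod a d) (uniserial_mod a (b - a))
           (uni_map b l a d) (uni_map a d a (b - a) :: nat \<Rightarrow> 'k::field mat)"
  unfolding is_exact_at_def rdim_uniserial
proof (intro allI ballI)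
  fix m and v :: "'k vec" assume v: "v \<in> carrier_vec (uni_dim a d m)"
  let ?f = "uni_map b l a d m :: 'k mat" and ?g = "uni_map a d a (b - a) m :: 'k mat"
  have "uni_dim a d m = 0 \<and> uni_dim b l m = 0 \<and> uni_dim a (b - a) m = 0
      \<or> uni_dim a d m = 1 \<and> uni_dim b l m = 0 \<and> uni_dim a (b - a) m = 1
      \<or> uni_dim a d m = 1 \<and> uni_dim b l m = 1 \<and> uni_dim a (b - a) m = 0"
    unfolding uni_dim_def using assms by (cases "m < a"; cases "m < b"; cases "m < a + d") simp_all
  thus "?g *\<^sub>v v = 0\<^sub>v (uni_dim a (b - a) m) \<longleftrightarrow> (\<exists>u\<in>carrier_vec (uni_dim b l m). ?f *\<^sub>v u = v)"
  proof (elim disjE conjE)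
    assume d: "uni_dim a d m = 0" "uni_dim b l m = 0" "uni_dim a (b - a) m = 0"
    have v0: "v = 0\<^sub>v 0" using v d by (intro carrier_vec_0_eq) simp
    have "?g \<in> carrier_mat 0 0" "?f \<in> carrier_mat 0 0"
      using uni_map_carrier[of a d a "b - a" m] uni_map_carrier[of b l a d m] d by simp_all
    hence "?g *\<^sub>v v = 0\<^sub>v (uni_dim a (b - a) m)" "?f *\<^sub>v 0\<^sub>v 0 = v"
      using mult_mat_vec_0_rows mult_mat_vec_0_cols[of ?f 0 "0\<^sub>v 0"] v0 d by simp_all
    moreover have "0\<^sub>v 0 \<in> carrier_vec (uni_dim b l m)" using d by simp
    ultimately show ?thesis by blast
  next
    assume d: "uni_dim a d m = 1" "uni_dim b l m = 0" "uni_dim a (b - a) m = 1"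
    have f: "?f \<in> carrier_mat 1 0" using uni_map_carrier[of b l a d m] d by simp
    have "?g *\<^sub>v v = v" using d v by (simp add: uni_map_def)
    moreover have "?f *\<^sub>v u = 0\<^sub>v 1" if "u \<in> carrier_vec 0" for u
      using mult_mat_vec_0_cols[OF f that] .
    ultimately show ?thesis using d zero_carrier_vec[of 0] by metis
  next
    assume d: "uni_dim a d m = 1" "uni_dim b l m = 1" "uni_dim a (b - a) m = 0"
    have "?g \<in> carrier_mat 0 1" using uni_map_carrier[of a d a "b - a" m] d by simp
    hence "?g *\<^sub>v v = 0\<^sub>v 0" by (rule mult_mat_vec_0_rows)
    moreover have "?f *\<^sub>v v = v" using d v by (simp add: uni_map_def)
    ultimately show ?thesis using d v by auto
  qed
qed

lemma is_epi_uni_map_quot: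
  assumes "l \<le> d"
  shows "is_epi (uniserial_mod a d) (uniserial_mod a l) (uni_map a d a l :: nat \<Rightarrow> 'k::field mat)"
  unfolding is_epi_def rdim_uniserial
proof (intro allI ballI)
  fix m and w :: "'k vec" assume w: "w \<in> carrier_vec (uni_dim a l m)"
  show "\<exists>v\<in>carrier_vec (uni_dim a d m). uni_map a d a l m *\<^sub>v v = w"
  proof (cases "uni_dim a l m = 0")
    case True
    hence "w = 0\<^sub>v 0" using w by (intro carrier_vec_0_eq) simp
    thus ?thesis using True mult_mat_vec_0_rows[of "uni_map a d a l m :: 'k mat"] uni_map_carrier[of a d a l m]
      by (intro bexI[of _ "0\<^sub>v (uni_dim a d m)"]) auto
  next
    case False
    hence "uni_dim a l m = 1" "uni_dim a d m = 1" using assms by (auto simp: uni_dim_def split: if_splits)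
    hence "uni_map a d a l m *\<^sub>v w = w" "w \<in> carrier_vec (uni_dim a d m)"
      using w by (simp_all add: uni_map_def)
    thus ?thesis by blast
  qed
qed

lemma uniserial_hom_from_socle:
  assumes Y: "wf_arrows Y" and l: "1 \<le> l" and \<phi>: "\<phi> \<in> carrier_mat 1 (rdim Y (a + l - 1))"
    and top: "0 < a \<Longrightarrow> \<phi> * rpath Y (a - 1) l = 0\<^sub>m 1 (rdim Y (a - 1))"
  obtains h where "is_hom Y (uniserial_mod a l) h" and "h (a + l - 1) = \<phi>"
proof -
  define j where "j = a + l - 1"
  have dim: "uni_dim a l m = (if a \<le> m \<and> m \<le> j then 1 else 0)" for m
    unfolding uni_dim_def j_def using l by auto
  define h where "h m = (if a \<le> m \<and> m \<le> j then \<phi> * rpath Y m (j - m) else 0\<^sub>m 0 (rdim Y m))" for m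
  have path: "rpath Y m (j - m) \<in> carrier_mat (rdim Y j) (rdim Y m)" if "m \<le> j" for m
    using rpath_carrier[OF Y, of m "j - m"] that by simp
  have hc: "h m \<in> carrier_mat (uni_dim a l m) (rdim Y m)" for m
    using \<phi> path[of m] unfolding h_def dim j_def[symmetric] by auto
  have "is_hom Y (uniserial_mod a l) h" unfolding is_hom_def rdim_uniserial
  proof (intro allI conjI hc)
    fix m
    show "h (Suc m) * rarr Y m = rarr (uniserial_mod a l) m * h m"
    proof (cases "a \<le> Suc m \<and> Suc m \<le> j")
      case False
      hence "uni_dim a l (Suc m) = 0" by (simp add: dim)
      thus ?thesis
        using mult_carrier_mat[OF hc[of "Suc m"] wf_arrowsD[OF Y, of m]]
          mult_carrier_mat[OF wf_arrowsD[OF wf_arrows_uniserial, of a l m, unfolded rdim_uniserial] hc[of m]]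
        by (intro carrier_mat_0_rows_eq[of _ "rdim Y m"]) (auto simp: rdim_uniserial)
    next
      case True
      have step: "\<phi> * rpath Y (Suc m) (j - Suc m) * rarr Y m = \<phi> * rpath Y m (j - m)"
      proof -
        have "j - m = Suc (j - Suc m)" using True by auto
        hence "rpath Y m (j - m) = rpath Y (Suc m) (j - Suc m) * rarr Y m"
          using rpath_Suc_left[OF Y, of m "j - Suc m"] by (simp only:)
        moreover have "\<phi> \<in> carrier_mat 1 (rdim Y j)" using \<phi> unfolding j_def .
        ultimately show ?thesis using path[of "Suc m"] wf_arrowsD[OF Y, of m] True
          by (simp add: assoc_mult_mat[of \<phi> 1 "rdim Y j"])
      qed
      show ?thesis
      proof (cases "a \<le> m")
        case True
        with \<open>a \<le> Suc m \<and> Suc m \<le> j\<close> have "uni_dim a l m = 1" "uni_dim a l (Suc m) = 1" by (auto simp: dim)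
        hence "rarr (uniserial_mod a l) m = 1\<^sub>m 1" by (simp add: rarr_uniserial)
        moreover have "h m \<in> carrier_mat 1 (rdim Y m)" using hc[of m] \<open>uni_dim a l m = 1\<close> by simp
        ultimately have "rarr (uniserial_mod a l) m * h m = h m" by (metis left_mult_one_mat)
        moreover have "h (Suc m) * rarr Y m = h m"
          using step \<open>a \<le> Suc m \<and> Suc m \<le> j\<close> True by (simp add: h_def)
        ultimately show ?thesis by simp
      next
        case False
        hence m: "Suc m = a" "0 < a" using \<open>a \<le> Suc m \<and> Suc m \<le> j\<close> by auto
        have "j - m = l" using m l unfolding j_def by auto
        hence "h (Suc m) * rarr Y m = 0\<^sub>m 1 (rdim Y m)"
          using step top m unfolding h_def using \<open>a \<le> Suc m \<and> Suc m \<le> j\<close> by auto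
        moreover have "rarr (uniserial_mod a l) m * h m = 0\<^sub>m 1 (rdim Y m)"
          using m hc[of m] \<open>a \<le> Suc m \<and> Suc m \<le> j\<close>
          by (intro mult_mat_through_0) (auto simp: rarr_uniserial dim)
        ultimately show ?thesis by simp
      qed
    qed
  qed
  moreover have "h (a + l - 1) = \<phi>"
  proof -
    have "a \<le> j" "\<phi> \<in> carrier_mat 1 (rdim Y j)" using \<phi> l unfolding j_def by auto
    thus ?thesis unfolding h_def j_def[symmetric] using right_mult_one_mat by simp
  qed
  ultimately show thesis by (rule that)
qed

lemma hom_to_uniserial_eqI:
  assumes X: "wf_arrows X" and h: "is_hom X (uniserial_mod a l) h" and h': "is_hom X (uniserial_mod a l) h'"
    and socle: "h (a + l - 1) = h' (a + l - 1)"
  shows "h m = h' m"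
proof (cases "a \<le> m \<and> m < a + l")
  case True
  let ?p = "a + l - 1 - m"
  have from_socle: "g m = g (a + l - 1) * rpath X m ?p" if g: "is_hom X (uniserial_mod a l) g" for g
  proof -
    have "g (m + ?p) * rpath X m ?p = rpath (uniserial_mod a l) m ?p * g m"
      by (rule hom_rpath[OF X wf_arrows_uniserial g])
    moreover have e: "m + ?p = a + l - 1" using True by simp
    moreover have "uni_dim a l (a + l - 1) = 1" "uni_dim a l m = 1" using True by (auto simp: uni_dim_def)
    moreover from this have "rpath (uniserial_mod a l) m ?p = (1\<^sub>m 1 :: 'a mat)"
      using rpath_uniserial[of a l m ?p] e by simp
    moreover have "g m \<in> carrier_mat 1 (rdim X m)"
      using is_homD(1)[OF g, of m] True by (simp add: rdim_uniserial uni_dim_def)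
    ultimately show ?thesis by simp
  qed
  show ?thesis using from_socle[OF h] from_socle[OF h'] socle by simp
next
  case False
  thus ?thesis using is_homD(1)[OF h, of m] is_homD(1)[OF h', of m]
    by (intro carrier_mat_0_rows_eq[of _ "rdim X m"]) (auto simp: rdim_uniserial uni_dim_def)
qed

text \<open>The hypothesis on \<open>h (a + l)\<close> says that \<open>h\<close> kills the submodule with top \<open>S\<^sub>a\<^sub>+\<^sub>l\<close>.\<close>

lemma hom_from_uniserial_quotient:
  assumes Y: "wf_arrows Y" and h: "is_hom (uniserial_mod a d) Y h" and l: "l < d"
    and vanish: "h (a + l) = 0\<^sub>m (rdim Y (a + l)) 1"
  shows "is_hom (uniserial_mod a l) Y (\<lambda>m. h m * uni_map a l a d m)"
  unfolding is_hom_def rdim_uniserial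
proof (intro allI conjI)
  fix m
  have hc: "h m \<in> carrier_mat (rdim Y m) (uni_dim a d m)" for m
    using is_homD(1)[OF h] by (simp add: rdim_uniserial)
  show "h m * uni_map a l a d m \<in> carrier_mat (rdim Y m) (uni_dim a l m)"
    using hc[of m] by (simp add: mult_carrier_mat)
  show "h (Suc m) * uni_map a l a d (Suc m) * rarr (uniserial_mod a l) m = rarr Y m * (h m * uni_map a l a d m)"
  proof (cases "a \<le> m \<and> m < a + l")
    case False
    hence "uni_dim a l m = 0" by (simp add: uni_dim_def)
    thus ?thesis
      using mult_carrier_mat[OF mult_carrier_mat[OF hc[of "Suc m"] uni_map_carrier[of a l a d "Suc m"]]
          wf_arrowsD[OF wf_arrows_uniserial, of a l m, unfolded rdim_uniserial]]
        mult_carrier_mat[OF wf_arrowsD[OF Y, of m] mult_carrier_mat[OF hc[of m] uni_map_carrier[of a l a d m]]]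
      by (intro carrier_mat_0_cols_eq[of _ "rdim Y (Suc m)"]) auto
  next
    case True
    with l have dims: "uni_dim a l m = 1" "uni_dim a d m = 1" "uni_dim a d (Suc m) = 1"
      by (auto simp: uni_dim_def)
    have "rarr Y m * (h m * uni_map a l a d m) = rarr Y m * h m"
      using hc[of m] dims by (simp add: uni_map_def)
    also have "\<dots> = h (Suc m)"
      using is_homD(2)[OF h, of m] hc[of "Suc m"] dims by (simp add: rarr_uniserial)
    finally have rhs: "rarr Y m * (h m * uni_map a l a d m) = h (Suc m)" .
    show ?thesis
    proof (cases "Suc m < a + l")
      case True
      hence "uni_dim a l (Suc m) = 1" using \<open>a \<le> m \<and> m < a + l\<close> by (simp add: uni_dim_def)
      thus ?thesis using rhs hc[of "Suc m"] dims by (simp add: uni_map_def rarr_uniserial)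
    next
      case False
      hence "Suc m = a + l" "uni_dim a l (Suc m) = 0" using True by (auto simp: uni_dim_def)
      moreover have "h (Suc m) * uni_map a l a d (Suc m) * ones 0 1 = 0\<^sub>m (rdim Y (Suc m)) 1"
        if "uni_dim a l (Suc m) = 0"
        using that mult_carrier_mat[OF hc[of "Suc m"] uni_map_carrier[of a l a d "Suc m"]]
        by (intro mult_mat_through_0) auto
      ultimately show ?thesis using rhs vanish dims by (simp add: rarr_uniserial)
    qed
  qed
qed

section \<open>Injective envelopes and coresolutions\<close>

lemma uniserial_hull_injective:
  assumes K: "linear_kupisch n c" and j: "j < n"
  shows "is_injective n c (uniserial_mod (j + 1 - dinj c j) (dinj c j) :: 'k::field rep)"
proof -
  define d where "d = dinj c j"
  define a where "a = j + 1 - d"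
  note dc = dinj_interval[OF K j, folded d_def, folded a_def]
  have ad: "a + d = j + 1" and aj: "a \<le> j" using dc unfolding a_def by auto
  have ac: "d \<le> c a" using dc(3)[OF aj] ad by auto
  have "is_injective n c (uniserial_mod a d :: 'k rep)" unfolding is_injective_def
  proof (intro conjI allI impI)
    show "is_rep n c (uniserial_mod a d :: 'k rep)"
      by (rule uniserial_is_rep[OF K]) (use ad j aj ac in auto)
    fix X Y :: "'k rep" and u g
    assume X: "is_rep n c X" and Y: "is_rep n c Y" and u: "is_hom X Y u" and mono: "is_mono X Y u"
      and g: "is_hom X (uniserial_mod a d) g"
    have wfX: "wf_arrows X" and wfY: "wf_arrows Y" using X Y by (auto intro: is_rep_wf_arrows)
    obtain L where L: "L \<in> carrier_mat (rdim X j) (rdim Y j)" and Lu: "L * u j = 1\<^sub>m (rdim X j)"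
      using mat_left_inverse_exists[OF is_homD(1)[OF u, of j]] mono unfolding is_mono_def by blast
    have gj: "g j \<in> carrier_mat 1 (rdim X j)"
      using is_homD(1)[OF g, of j] aj ad by (simp add: rdim_uniserial uni_dim_def)
    define \<phi> where "\<phi> = g j * L"
    have \<phi>: "\<phi> \<in> carrier_mat 1 (rdim Y (a + d - 1))" using gj L ad unfolding \<phi>_def by auto
    have top: "\<phi> * rpath Y (a - 1) d = 0\<^sub>m 1 (rdim Y (a - 1))" if "0 < a"
    proof -
      \<comment> \<open>\<open>a\<close> is the least vertex whose projective reaches \<open>S\<^sub>j\<close>, so paths from \<open>a - 1\<close> of
          length \<open>d\<close> act as zero on every module.\<close>
      have "\<not> j < a - 1 + c (a - 1)" using dc(3)[of "a - 1"] that aj by simp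
      hence "c (a - 1) \<le> d" using ad that by linarith
      hence "rpath Y (a - 1) d = 0\<^sub>m (rdim Y (a + d - 1)) (rdim Y (a - 1))"
        using is_rep_rpath_zero[OF Y, of "a - 1" d] j aj that by simp
      thus ?thesis using right_mult_zero_mat[OF \<phi>] by simp
    qed
    obtain h where h: "is_hom Y (uniserial_mod a d) h" and hj: "h (a + d - 1) = \<phi>"
      using uniserial_hom_from_socle[OF wfY dc(1) \<phi> top] .
    have "h m * u m = g m" for m
    proof (rule hom_to_uniserial_eqI[OF wfX is_hom_comp[OF u h wfX wfY wf_arrows_uniserial] g])
      have "\<phi> * u j = g j * (L * u j)"
        unfolding \<phi>_def using gj L is_homD(1)[OF u, of j] by (rule assoc_mult_mat)
      thus "h (a + d - 1) * u (a + d - 1) = g (a + d - 1)" using hj ad gj Lu by simp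
    qed
    with h show "\<exists>h. is_hom Y (uniserial_mod a d) h \<and> (\<forall>j. h j * u j = g j)" by blast
  qed
  thus ?thesis unfolding a_def d_def .
qed

lemma uniserial_not_injective:
  assumes K: "linear_kupisch n c" and bl: "b + l \<le> n" and l: "1 \<le> l" and lc: "l \<le> c b"
    and ld: "l < dinj c (b + l - 1)"
  shows "\<not> is_injective n c (uniserial_mod b l :: 'k::field rep)"
proof
  assume inj: "is_injective n c (uniserial_mod b l :: 'k rep)"
  define j where "j = b + l - 1"
  have j: "j < n" using bl l unfolding j_def by auto
  define d where "d = dinj c j"
  define a where "a = j + 1 - d"
  note dc = dinj_interval[OF K j, folded d_def, folded a_def]
  have ad: "a + d = b + l" and ab: "a < b" using dc ld l unfolding a_def d_def j_def by auto
  let ?M = "uniserial_mod b l :: 'k rep"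
  let ?E = "uniserial_mod a d :: 'k rep"
  have "is_injective n c ?E" using uniserial_hull_injective[OF K j] unfolding a_def d_def .
  hence "is_rep n c ?E" unfolding is_injective_def by blast
  moreover have "is_rep n c ?M" using inj unfolding is_injective_def by blast
  moreover have "is_hom ?M ?E (uni_map b l a d)" "is_mono ?M ?E (uni_map b l a d)"
    using is_hom_uni_map_incl[of a b l d] is_mono_uni_map_incl[of a b l d] ab ad by auto
  moreover note is_hom_id[OF wf_arrows_uniserial, of b l]
  ultimately obtain h where h: "is_hom ?E ?M h" and hu: "\<And>m. h m * uni_map b l a d m = 1\<^sub>m (rdim ?M m)"
    using inj unfolding is_injective_def by blast
  \<comment> \<open>A retraction of the envelope onto \<open>M\<close> would be the identity at the top \<open>b\<close> of \<open>M\<close>,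
      but it must vanish at \<open>b - 1\<close>, which lies in the support of \<open>E\<close> but not of \<open>M\<close>.\<close>
  have dims: "uni_dim b l b = 1" "uni_dim a d b = 1" "uni_dim b l (b - 1) = 0" "uni_dim a d (b - 1) = 1"
    using ab ad l unfolding uni_dim_def by auto
  have hc: "h m \<in> carrier_mat (uni_dim b l m) (uni_dim a d m)" for m
    using is_homD(1)[OF h] by (simp add: rdim_uniserial)
  have "h b = 1\<^sub>m 1" using hu[of b] hc[of b] dims by (simp add: uni_map_def rdim_uniserial)
  moreover have "h (Suc (b - 1)) * rarr ?E (b - 1) = rarr ?M (b - 1) * h (b - 1)"
    by (rule is_homD(2)[OF h])
  ultimately have "(1\<^sub>m 1 :: 'k mat) = ones 1 0 * h (b - 1)"
    using ab dims by (simp add: rarr_uniserial)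
  also have "\<dots> = 0\<^sub>m 1 1" using hc[of "b - 1"] dims by (intro mult_mat_through_0) auto
  finally have "(1\<^sub>m 1 :: 'k mat) $$ (0, 0) = 0\<^sub>m 1 1 $$ (0, 0)" by simp
  thus False by simp
qed

lemma uniserial_injective_iff:
  assumes K: "linear_kupisch n c" and bl: "b + l \<le> n" and l: "1 \<le> l" and lc: "l \<le> c b"
  shows "is_injective n c (uniserial_mod b l :: 'k::field rep) \<longleftrightarrow> l = dinj c (b + l - 1)"
proof
  assume "is_injective n c (uniserial_mod b l :: 'k rep)"
  hence "\<not> l < dinj c (b + l - 1)" using uniserial_not_injective[OF assms] by blast
  thus "l = dinj c (b + l - 1)" using dinj_hull_bounds(1)[OF assms] by simp
next
  assume e: "l = dinj c (b + l - 1)"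
  hence "b = b + l - 1 + 1 - dinj c (b + l - 1)" using l by auto
  with e show "is_injective n c (uniserial_mod b l :: 'k rep)"
    using uniserial_hull_injective[OF K, of "b + l - 1", where 'k='k] bl l by simp
qed

lemma uniserial_socle_pred_injective_iff:
  assumes K: "linear_kupisch n c" and ai: "a < i" and i: "i < n" and lc: "i - a \<le> c a"
  shows "is_injective n c (uniserial_mod a (i - a) :: 'k::field rep) \<longleftrightarrow> i - a = dinj_pred c i"
proof -
  have "a + (i - a) = i" "1 \<le> i - a" "i \<noteq> 0" using ai by auto
  thus ?thesis using uniserial_injective_iff[OF K, of a "i - a"] i lc by (simp add: dinj_pred_def)
qed

lemma injective_hull_splits_off:
  fixes I :: "'k::field rep"
  assumes injE: "is_injective n c (uniserial_mod a d :: 'k rep)"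
    and M: "is_rep n c (uniserial_mod b l :: 'k rep)" and ab: "a \<le> b" and bl: "b + l = a + d" and l: "1 \<le> l"
    and I: "is_injective n c I" and f: "is_hom (uniserial_mod b l) I f"
    and mono: "is_mono (uniserial_mod b l) I f"
  obtains ph ps where "is_hom (uniserial_mod a d) I ph" and "is_hom I (uniserial_mod a d) ps"
    and "\<And>m. ph m * uni_map b l a d m = f m" and "\<And>m. ps m * ph m = 1\<^sub>m (uni_dim a d m)"
proof -
  let ?M = "uniserial_mod b l :: 'k rep" and ?E = "uniserial_mod a d :: 'k rep"
  let ?u = "uni_map b l a d :: nat \<Rightarrow> 'k mat"
  have repE: "is_rep n c ?E" and repI: "is_rep n c I" using injE I unfolding is_injective_def by blast+
  have wfI: "wf_arrows I" by (rule is_rep_wf_arrows[OF repI])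
  have u: "is_hom ?M ?E ?u" and mono_u: "is_mono ?M ?E ?u"
    using is_hom_uni_map_incl[OF ab bl] is_mono_uni_map_incl[OF ab bl] by auto
  obtain ph where ph: "is_hom ?E I ph" and ph_u: "\<And>m. ph m * ?u m = f m"
    using I M repE u mono_u f unfolding is_injective_def by blast
  obtain ps where ps: "is_hom I ?E ps" and ps_f: "\<And>m. ps m * f m = ?u m"
    using injE M repI f mono u unfolding is_injective_def by blast
  have "ps m * ph m = 1\<^sub>m (rdim ?E m)" for m
  proof (rule hom_to_uniserial_eqI[OF wf_arrows_uniserial
        is_hom_comp[OF ph ps wf_arrows_uniserial wfI wf_arrows_uniserial] is_hom_id[OF wf_arrows_uniserial]])
    let ?s = "a + d - 1"
    have dims: "uni_dim a d ?s = 1" "uni_dim b l ?s = 1" using ab bl l by (auto simp: uni_dim_def)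
    hence u_s: "?u ?s = 1\<^sub>m 1" by (simp add: uni_map_def)
    have phc: "ph ?s \<in> carrier_mat (rdim I ?s) 1" and psc: "ps ?s \<in> carrier_mat 1 (rdim I ?s)"
      using is_homD(1)[OF ph, of ?s] is_homD(1)[OF ps, of ?s] dims by (simp_all add: rdim_uniserial)
    have "ps ?s * ph ?s = ps ?s * (ph ?s * ?u ?s)" using right_mult_one_mat[OF phc] u_s by simp
    also have "\<dots> = ?u ?s" using ph_u ps_f by simp
    finally show "ps ?s * ph ?s = 1\<^sub>m (rdim ?E ?s)" using u_s dims by (simp add: rdim_uniserial)
  qed
  with ph ps ph_u show thesis by (intro that) (auto simp: rdim_uniserial)
qed

lemma functional_through_epi_kills_path:
  assumes wf0: "wf_arrows I0" and wf1: "wf_arrows I1" and g: "is_hom I0 I1 g" and epi: "is_epi I0 I1 g"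
    and ps: "is_hom I0 (uniserial_mod a d) ps" and a: "0 < a" and l: "1 \<le> l" "l \<le> d"
    and \<phi>: "\<phi> \<in> carrier_mat 1 (rdim I1 (a - 1 + l))" and \<phi>_g: "\<phi> * g (a - 1 + l) = ps (a - 1 + l)"
  shows "\<phi> * rpath I1 (a - 1) l = 0\<^sub>m 1 (rdim I1 (a - 1))"
proof -
  let ?s = "a - 1 + l" and ?P0 = "rpath I0 (a - 1) l" and ?P1 = "rpath I1 (a - 1) l"
  have P0: "?P0 \<in> carrier_mat (rdim I0 ?s) (rdim I0 (a - 1))" and P1: "?P1 \<in> carrier_mat (rdim I1 ?s) (rdim I1 (a - 1))"
    using rpath_carrier[OF wf0] rpath_carrier[OF wf1] by blast+
  note gc = is_homD(1)[OF g]
  have psc: "ps m \<in> carrier_mat (uni_dim a d m) (rdim I0 m)" for m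
    using is_homD(1)[OF ps] by (simp add: rdim_uniserial)
  \<comment> \<open>After composing with \<open>g\<close> the path factors through \<open>ps (a - 1)\<close>, whose target is zero.\<close>
  have "\<phi> * ?P1 * g (a - 1) = \<phi> * (g ?s * ?P0)"
    using assoc_mult_mat[OF \<phi> P1 gc] hom_rpath[OF wf0 wf1 g, of "a - 1" l] by simp
  also have "\<dots> = ps ?s * ?P0" using assoc_mult_mat[OF \<phi> gc P0, symmetric] \<phi>_g by simp
  also have "\<dots> = rpath (uniserial_mod a d) (a - 1) l * ps (a - 1)"
    by (rule hom_rpath[OF wf0 wf_arrows_uniserial ps])
  also have "\<dots> = 0\<^sub>m 1 (rdim I0 (a - 1))"
    using psc[of "a - 1"] a l by (intro mult_mat_through_0) (auto simp: rpath_uniserial uni_dim_def)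
  also have "\<dots> = 0\<^sub>m 1 (rdim I1 (a - 1)) * g (a - 1)" by (rule left_mult_zero_mat[OF gc, symmetric])
  finally have "\<phi> * ?P1 * g (a - 1) = 0\<^sub>m 1 (rdim I1 (a - 1)) * g (a - 1)" .
  moreover have "\<exists>v\<in>carrier_vec (rdim I0 (a - 1)). g (a - 1) *\<^sub>v v = w"
    if "w \<in> carrier_vec (rdim I1 (a - 1))" for w
    using epi that unfolding is_epi_def by blast
  ultimately show ?thesis
    by (intro mat_mult_right_cancel_surj[OF mult_carrier_mat[OF \<phi> P1] zero_carrier_mat gc])
qed

lemma injdim_le_one_if_hull_quotient_injective:
  assumes injE: "is_injective n c (uniserial_mod a d :: 'k::field rep)"
    and injN: "is_injective n c (uniserial_mod a (i - a) :: 'k rep)"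
    and ai: "a \<le> i" and ik: "i + k = a + d"
  shows "injdim_le_one n c (uniserial_mod i k :: 'k rep)"
proof -
  have q: "i - a \<le> d" using ik by simp
  show ?thesis unfolding injdim_le_one_def
    using injE injN is_hom_uni_map_incl[OF ai ik] is_mono_uni_map_incl[OF ai ik]
      is_hom_uni_map_quot[OF q] uniserial_short_exact[OF ai ik] is_epi_uni_map_quot[OF q] by blast
qed

lemma injdim_le_one_imp_hull_quotient_injective:
  assumes injE: "is_injective n c (uniserial_mod a d :: 'k::field rep)"
    and M: "is_rep n c (uniserial_mod i k :: 'k rep)" and N: "is_rep n c (uniserial_mod a (i - a) :: 'k rep)"
    and ai: "a < i" and ik: "i + k = a + d" and k: "1 \<le> k"
    and idl: "injdim_le_one n c (uniserial_mod i k :: 'k rep)"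
  shows "is_injective n c (uniserial_mod a (i - a) :: 'k rep)"
proof -
  let ?M = "uniserial_mod i k :: 'k rep" and ?E = "uniserial_mod a d :: 'k rep"
    and ?N = "uniserial_mod a (i - a) :: 'k rep" and ?q = "uni_map a (i - a) a d :: nat \<Rightarrow> 'k mat"
  from idl obtain I0 I1 :: "'k rep" and f g where I0: "is_injective n c I0" and I1: "is_injective n c I1"
    and f: "is_hom ?M I0 f" and g: "is_hom I0 I1 g" and mono: "is_mono ?M I0 f"
    and exact: "is_exact_at ?M I0 I1 f g" and epi: "is_epi I0 I1 g"
    unfolding injdim_le_one_def by blast
  have wf0: "wf_arrows I0" and wf1: "wf_arrows I1"
    using I0 I1 is_rep_wf_arrows unfolding is_injective_def by blast+
  obtain ph ps where ph: "is_hom ?E I0 ph" and ps: "is_hom I0 ?E ps"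
    and ph_u: "\<And>m. ph m * uni_map i k a d m = f m" and ps_ph: "\<And>m. ps m * ph m = 1\<^sub>m (uni_dim a d m)"
    using injective_hull_splits_off[OF injE M less_imp_le[OF ai] ik k I0 f mono] by blast
  note phc = is_homD(1)[OF ph, unfolded rdim_uniserial] and psc = is_homD(1)[OF ps, unfolded rdim_uniserial]
  note gc = is_homD(1)[OF g]
  \<comment> \<open>\<open>g \<circ> ph\<close> kills \<open>M\<close>, so it factors through \<open>N = E/M\<close>; this gives \<open>N \<rightarrow> I\<^sub>1\<close>.\<close>
  have "g i * ph i = 0\<^sub>m (rdim I1 i) 1"
  proof -
    have dims: "uni_dim a d i = 1" "uni_dim i k i = 1" using ai ik k by (auto simp: uni_dim_def)
    hence "ph i = f i" using ph_u[of i] right_mult_one_mat[OF phc[of i]] by (simp add: uni_map_def)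
    thus ?thesis using is_exact_at_comp_zero[OF exact f g, of i] dims by (simp add: rdim_uniserial)
  qed
  hence al: "is_hom ?N I1 (\<lambda>m. g m * ph m * ?q m)"
    using hom_from_uniserial_quotient[OF wf1 is_hom_comp[OF ph g wf_arrows_uniserial wf0 wf1], of "i - a"]
      ai ik k by simp
  \<comment> \<open>Conversely, at the socle \<open>i - 1\<close> of \<open>N\<close> the map \<open>g\<close> is injective since \<open>M\<close> vanishes there,
      and \<open>ps\<close> composed with a left inverse of it extends to \<open>I\<^sub>1 \<rightarrow> N\<close>.\<close>
  let ?s = "i - 1"
  have dims_s: "uni_dim a d ?s = 1" "uni_dim a (i - a) ?s = 1" "uni_dim i k ?s = 0"
    using ai ik by (auto simp: uni_dim_def)
  have "v = 0\<^sub>v (rdim I0 ?s)" if "v \<in> carrier_vec (rdim I0 ?s)" "g ?s *\<^sub>v v = 0\<^sub>v (rdim I1 ?s)" for v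
    using is_exact_at_injective_where_zero[OF exact f _ that] dims_s by (simp add: rdim_uniserial)
  then obtain L where L: "L \<in> carrier_mat (rdim I0 ?s) (rdim I1 ?s)" and Lg: "L * g ?s = 1\<^sub>m (rdim I0 ?s)"
    using mat_left_inverse_exists[OF gc[of ?s]] by blast
  define \<phi> where "\<phi> = ps ?s * L"
  have \<phi>: "\<phi> \<in> carrier_mat 1 (rdim I1 ?s)" unfolding \<phi>_def using psc[of ?s] L dims_s by simp
  have \<phi>_g: "\<phi> * g ?s = ps ?s"
    unfolding \<phi>_def using assoc_mult_mat[OF psc[of ?s] L gc[of ?s]] Lg psc[of ?s] by simp
  have top: "\<phi> * rpath I1 (a - 1) (i - a) = 0\<^sub>m 1 (rdim I1 (a - 1))" if "0 < a"
    using functional_through_epi_kills_path[OF wf0 wf1 g epi ps that, where l = "i - a" and \<phi> = \<phi>] \<phi> \<phi>_g ai ik k that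
    by simp
  have "1 \<le> i - a" "\<phi> \<in> carrier_mat 1 (rdim I1 (a + (i - a) - 1))" using \<phi> ai by auto
  then obtain be where be: "is_hom I1 ?N be" and "be (a + (i - a) - 1) = \<phi>"
    using uniserial_hom_from_socle[OF wf1 _ _ top] by blast
  hence be_s: "be ?s = \<phi>" using ai by simp
  have "be m * (g m * ph m * ?q m) = 1\<^sub>m (rdim ?N m)" for m
  proof (rule hom_to_uniserial_eqI[OF wf_arrows_uniserial
        is_hom_comp[OF al be wf_arrows_uniserial wf1 wf_arrows_uniserial] is_hom_id[OF wf_arrows_uniserial]])
    have "g ?s * ph ?s * ?q ?s = g ?s * ph ?s"
      using right_mult_one_mat[OF mult_carrier_mat[OF gc[of ?s] phc[of ?s]]] dims_s by (simp add: uni_map_def)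
    hence "be ?s * (g ?s * ph ?s * ?q ?s) = ps ?s * ph ?s"
      using be_s assoc_mult_mat[OF \<phi> gc phc, symmetric] \<phi>_g by simp
    thus "be (a + (i - a) - 1) * (g (a + (i - a) - 1) * ph (a + (i - a) - 1) * ?q (a + (i - a) - 1))
        = 1\<^sub>m (rdim ?N (a + (i - a) - 1))"
      using ps_ph dims_s ai by (simp add: rdim_uniserial)
  qed
  thus ?thesis by (rule injective_retract[OF N I1 al be])
qed

lemma injdim_le_one_iff_hull_quotient_injective:
  assumes injE: "is_injective n c (uniserial_mod a d :: 'k::field rep)"
    and M: "is_rep n c (uniserial_mod i k :: 'k rep)" and N: "is_rep n c (uniserial_mod a (i - a) :: 'k rep)"
    and ai: "a \<le> i" and ik: "i + k = a + d" and k: "1 \<le> k"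
  shows "injdim_le_one n c (uniserial_mod i k :: 'k rep) \<longleftrightarrow>
    is_injective n c (uniserial_mod i k :: 'k rep) \<or> (a < i \<and> is_injective n c (uniserial_mod a (i - a) :: 'k rep))"
proof
  assume idl: "injdim_le_one n c (uniserial_mod i k :: 'k rep)"
  show "is_injective n c (uniserial_mod i k :: 'k rep) \<or> (a < i \<and> is_injective n c (uniserial_mod a (i - a) :: 'k rep))"
  proof (cases "a = i")
    case True
    with ik injE show ?thesis by simp
  next
    case False
    with ai have "a < i" by simp
    with injdim_le_one_imp_hull_quotient_injective[OF injE M N _ ik k idl] show ?thesis by blast
  qed
next
  assume "is_injective n c (uniserial_mod i k :: 'k rep) \<or> (a < i \<and> is_injective n c (uniserial_mod a (i - a) :: 'k rep))"
  thus "injdim_le_one n c (uniserial_mod i k :: 'k rep)"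
    using injdim_le_one_if_injective injdim_le_one_if_hull_quotient_injective[OF injE _ ai ik] by blast
qed

theorem mainTheorem5:
  fixes n :: nat and c :: "nat \<Rightarrow> nat" and i k :: nat
  assumes "linear_kupisch n c"
    and "i < n" and "1 \<le> k" and "k \<le> c i"
  shows "(injdim_le_one n c (uniserial_mod i k :: 'k::field rep) \<longleftrightarrow>
            (k = dinj c (i + k - 1) \<or>
             (k < dinj c (i + k - 1) \<and> dinj c (i + k - 1) - k = dinj_pred c i)))
       \<and> (k = dinj c (i + k - 1) \<longleftrightarrow> is_injective n c (uniserial_mod i k :: 'k rep))"
proof -
  note K = assms(1)
  have ikn: "i + k \<le> n" using assms(1,2,4) unfolding linear_kupisch_def by auto
  define d where "d = dinj c (i + k - 1)"
  define a where "a = i + k - d"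
  note hull = dinj_hull_bounds[OF K ikn assms(3,4), folded d_def, folded a_def]
  have ik: "i + k = a + d" and ai: "a \<le> i" using hull unfolding a_def by auto
  have injE: "is_injective n c (uniserial_mod a d :: 'k rep)"
  proof -
    have "i + k - 1 < n" using ikn assms(3) by simp
    from uniserial_hull_injective[OF K this] show ?thesis using assms(3) unfolding a_def d_def by simp
  qed
  have M: "is_rep n c (uniserial_mod i k :: 'k rep)" by (rule uniserial_is_rep[OF K ikn assms(2,4)])
  have N: "is_rep n c (uniserial_mod a (i - a) :: 'k rep)"
    by (rule uniserial_is_rep[OF K]) (use ikn assms(2) hull ai ik in auto)
  have injM: "is_injective n c (uniserial_mod i k :: 'k rep) \<longleftrightarrow> k = d"
    unfolding d_def by (rule uniserial_injective_iff[OF K ikn assms(3,4)])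
  have injN: "is_injective n c (uniserial_mod a (i - a) :: 'k rep) \<longleftrightarrow> i - a = dinj_pred c i" if "a < i"
    by (rule uniserial_socle_pred_injective_iff[OF K that assms(2)]) (use hull ik in linarith)
  have "a < i \<longleftrightarrow> k < d" "i - a = d - k" using ik by auto
  with injdim_le_one_iff_hull_quotient_injective[OF injE M N ai ik assms(3)] injM injN
  show ?thesis unfolding d_def by auto
qed

end
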